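(* Let $A$, $\kappa$, $I_0=\{i_1<\dots<i_N\}$, $\tilde\phi$ be as in the context. Let $1\le n\le N$, let $k_1,\dots,k_n\in\{1,\dots,N\}$ be distinct rows and $j_1,\dots,j_n\in[M]\setminus I_0$ distinct non-pivot columns with $a_{k_r,j_r}\ne0$ for all $r$. Let $J=(I_0\setminus\{i_{k_1},\dots,i_{k_n}\})\cup\{j_1,\dots,j_n\}$. Then $$\Big|\prod_{r=1}^n a_{k_r,j_r}\Big|\frac{E_J}{E_{I_0}}=\Big|\prod_{1\le r<r'\le n}C_{r,r'}\Big|\exp\Big(\sum_{r=1}^n\tilde\phi_{(k_r,j_r)}\Big),\qquad C_{r,r'}=\frac{(\kappa_{i_{k_r}}-\kappa_{i_{k_{r'}}})(\kappa_{j_r}-\kappa_{j_{r'}})}{(\kappa_{i_{k_r}}-\kappa_{j_{r'}})(\kappa_{j_r}-\kappa_{i_{k_{r'}}})}.$$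
   Context: $\kappa_1<\dots<\kappa_M$ are real; $\xi_j=\kappa_jx+\kappa_j^2y+\kappa_j^3t$; for $I=\{i_1<\dots<i_N\}$, $E_I=\prod_{a<b}(\kappa_{i_b}-\kappa_{i_a})\exp(\sum_a\xi_{i_a})$ (indices listed increasingly). $A=(a_{k,j})$ is a real $N\times M$ rank-$N$ matrix in reduced row echelon form with pivot columns $I_0=\{i_1<\dots<i_N\}$ (pivot of row $k$ in column $i_k$). For each row $k$ and each non-pivot column $j$ with $a_{k,j}\ne0$, define $\phi_{(k,j)}=\xi_j-\xi_{i_k}$, $e^{\phi^0_{(k,j)}}=|a_{k,j}|\prod_{m\ne k}|\kappa_{i_m}-\kappa_j|/\prod_{m\ne k}|\kappa_{i_m}-\kappa_{i_k}|$, and $\tilde\phi_{(k,j)}=\phi_{(k,j)}+\phi^0_{(k,j)}$. *)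

theory Defs
  imports Complex_Main
begin

definition xi :: "(nat \<Rightarrow> real) \<Rightarrow> real \<Rightarrow> real \<Rightarrow> real \<Rightarrow> nat \<Rightarrow> real" where
  "xi \<kappa> x y t j = \<kappa> j * x + (\<kappa> j)^2 * y + (\<kappa> j)^3 * t"

text \<open>E_I = prod_{a<b} (kappa_{i_b} - kappa_{i_a}) exp(sum_a xi_{i_a}), indices of I listed
  increasingly; the pairs a<b are exactly the pairs (p,q) of elements of I with p<q.\<close>
definition E :: "(nat \<Rightarrow> real) \<Rightarrow> real \<Rightarrow> real \<Rightarrow> real \<Rightarrow> nat set \<Rightarrow> real" where
  "E \<kappa> x y t I =
     (\<Prod>(p,q)\<in>{(p,q). p \<in> I \<and> q \<in> I \<and> p < q}. \<kappa> q - \<kappa> p) * exp (\<Sum>i\<in>I. xi \<kappa> x y t i)"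

text \<open>A (rows 1..N, columns 1..M) is in reduced row echelon form with pivot of row k in
  column piv k, where piv is strictly increasing on 1..N (hence rank N).\<close>
definition rref :: "nat \<Rightarrow> nat \<Rightarrow> (nat \<Rightarrow> nat \<Rightarrow> real) \<Rightarrow> (nat \<Rightarrow> nat) \<Rightarrow> bool" where
  "rref N M A piv \<longleftrightarrow>
     (\<forall>k\<in>{1..N}. piv k \<in> {1..M}) \<and>
     (\<forall>k\<in>{1..N}. \<forall>k'\<in>{1..N}. k < k' \<longrightarrow> piv k < piv k') \<and>
     (\<forall>k\<in>{1..N}. A k (piv k) = 1) \<and>
     (\<forall>k\<in>{1..N}. \<forall>m\<in>{1..N}. m \<noteq> k \<longrightarrow> A m (piv k) = 0) \<and>
     (\<forall>k\<in>{1..N}. \<forall>j\<in>{1..M}. j < piv k \<longrightarrow> A k j = 0)"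

definition phi :: "(nat \<Rightarrow> real) \<Rightarrow> real \<Rightarrow> real \<Rightarrow> real \<Rightarrow> (nat \<Rightarrow> nat) \<Rightarrow> nat \<Rightarrow> nat \<Rightarrow> real" where
  "phi \<kappa> x y t piv k j = xi \<kappa> x y t j - xi \<kappa> x y t (piv k)"

definition phi0 :: "nat \<Rightarrow> (nat \<Rightarrow> nat \<Rightarrow> real) \<Rightarrow> (nat \<Rightarrow> real) \<Rightarrow> (nat \<Rightarrow> nat) \<Rightarrow> nat \<Rightarrow> nat \<Rightarrow> real" where
  "phi0 N A \<kappa> piv k j =
     ln (\<bar>A k j\<bar> * (\<Prod>m\<in>{1..N} - {k}. \<bar>\<kappa> (piv m) - \<kappa> j\<bar>)
          / (\<Prod>m\<in>{1..N} - {k}. \<bar>\<kappa> (piv m) - \<kappa> (piv k)\<bar>))"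

definition phit :: "nat \<Rightarrow> (nat \<Rightarrow> nat \<Rightarrow> real) \<Rightarrow> (nat \<Rightarrow> real) \<Rightarrow> real \<Rightarrow> real \<Rightarrow> real
                     \<Rightarrow> (nat \<Rightarrow> nat) \<Rightarrow> nat \<Rightarrow> nat \<Rightarrow> real" where
  "phit N A \<kappa> x y t piv k j = phi \<kappa> x y t piv k j + phi0 N A \<kappa> piv k j"

end

theory Submission
  imports Defs
begin

text \<open>For a set S of columns on which \<kappa> is strictly increasing, the Vandermonde factor of E_S
  is the square root of discr \<kappa> S, the product of all \<bar>\<kappa> p - \<kappa> q\<bar> over ordered pairs p \<noteq> q.
  Being symmetric, this product splits over disjoint unions and can be reindexed along injections.
  Exchanging the pivots i_{k_r} for the columns j_r, the ratio of discriminants is therefore a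
  quotient of products over the remaining pivots, the removed pivots and the new columns.  The
  factors involving the remaining pivots are exactly those of exp \<phi>^0, and what is left over is
  the square of the product of the cross ratios C_{r,r'}.  The exponential parts differ by
  exp (\<Sum>\<phi>), which completes exp (\<Sum>\<tilde>\<phi>).\<close>

definition discr :: "('a \<Rightarrow> real) \<Rightarrow> 'a set \<Rightarrow> real" where
  "discr \<kappa> S = (\<Prod>p\<in>S. \<Prod>q\<in>S - {p}. \<bar>\<kappa> p - \<kappa> q\<bar>)"

definition dist_prod :: "('a \<Rightarrow> real) \<Rightarrow> 'a set \<Rightarrow> 'a set \<Rightarrow> real" where
  "dist_prod \<kappa> S T = (\<Prod>p\<in>S. \<Prod>q\<in>T. \<bar>\<kappa> p - \<kappa> q\<bar>)"

text \<open>The classical cross ratio (a, b; c, d); C_{r,r'} is the cross ratio of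
  \<kappa>_{i_{k_r}}, \<kappa>_{j_r}, \<kappa>_{i_{k_{r'}}}, \<kappa>_{j_{r'}}.\<close>
definition cross_ratio :: "real \<Rightarrow> real \<Rightarrow> real \<Rightarrow> real \<Rightarrow> real" where
  "cross_ratio a b c d = (a - c) * (b - d) / ((a - d) * (b - c))"

lemma cross_ratio_swap_pairs: "cross_ratio c d a b = cross_ratio a b c d"
  by (simp add: cross_ratio_def algebra_simps)

lemma abs_cross_ratio:
  "\<bar>cross_ratio a b c d\<bar> = \<bar>a - c\<bar> * \<bar>b - d\<bar> / (\<bar>a - d\<bar> * \<bar>b - c\<bar>)"
  by (simp add: cross_ratio_def abs_mult abs_divide)

lemma prod_offdiag_swap:
  fixes h :: "'a \<Rightarrow> 'a \<Rightarrow> 'b::comm_monoid_mult"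
  assumes "finite I"
  shows "(\<Prod>r\<in>I. \<Prod>r'\<in>I - {r}. h r r') = (\<Prod>r\<in>I. \<Prod>r'\<in>I - {r}. h r' r)"
  using prod.swap_restrict[OF assms assms, of h "\<lambda>r r'. r \<noteq> r'"]
  by (simp add: set_diff_eq eq_commute)

lemma prod_offdiag_reindex:
  fixes g :: "'a \<Rightarrow> 'a \<Rightarrow> 'b::comm_monoid_mult"
  assumes "inj_on f I"
  shows "(\<Prod>p\<in>f ` I. \<Prod>q\<in>f ` I - {p}. g p q) = (\<Prod>r\<in>I. \<Prod>r'\<in>I - {r}. g (f r) (f r'))"
proof -
  have "(\<Prod>q\<in>f ` I - {f r}. g (f r) q) = (\<Prod>r'\<in>I - {r}. g (f r) (f r'))" if "r \<in> I" for r
  proof -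
    have "f ` I - {f r} = f ` (I - {r})" using assms that by (auto simp: inj_on_def)
    moreover have "inj_on f (I - {r})" using assms by (rule inj_on_subset) auto
    ultimately show ?thesis by (simp add: prod.reindex)
  qed
  with assms show ?thesis by (simp add: prod.reindex)
qed

lemma prod_offdiag_Un:
  fixes g :: "'a \<Rightarrow> 'a \<Rightarrow> 'b::comm_monoid_mult"
  assumes sym: "\<And>p q. g p q = g q p" and "finite S" "finite T" "S \<inter> T = {}"
  shows "(\<Prod>p\<in>S \<union> T. \<Prod>q\<in>(S \<union> T) - {p}. g p q) =
         (\<Prod>p\<in>S. \<Prod>q\<in>S - {p}. g p q) * (\<Prod>p\<in>T. \<Prod>q\<in>T - {p}. g p q) * (\<Prod>p\<in>S. \<Prod>q\<in>T. g p q)^2"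
proof -
  have S: "(\<Prod>q\<in>(S \<union> T) - {p}. g p q) = (\<Prod>q\<in>S - {p}. g p q) * (\<Prod>q\<in>T. g p q)" if "p \<in> S" for p
  proof -
    have "(S \<union> T) - {p} = (S - {p}) \<union> T" "(S - {p}) \<inter> T = {}" using that assms by auto
    then show ?thesis using assms(2,3) by (simp add: prod.union_disjoint)
  qed
  have T: "(\<Prod>q\<in>(S \<union> T) - {p}. g p q) = (\<Prod>q\<in>S. g p q) * (\<Prod>q\<in>T - {p}. g p q)" if "p \<in> T" for p
  proof -
    have "(S \<union> T) - {p} = S \<union> (T - {p})" "S \<inter> (T - {p}) = {}" using that assms by auto
    then show ?thesis using assms(2,3) by (simp add: prod.union_disjoint)
  qed
  have "(\<Prod>p\<in>S \<union> T. \<Prod>q\<in>(S \<union> T) - {p}. g p q) =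
        (\<Prod>p\<in>S. \<Prod>q\<in>(S \<union> T) - {p}. g p q) * (\<Prod>p\<in>T. \<Prod>q\<in>(S \<union> T) - {p}. g p q)"
    using assms by (simp add: prod.union_disjoint)
  also have "\<dots> = (\<Prod>p\<in>S. \<Prod>q\<in>S - {p}. g p q) * (\<Prod>p\<in>S. \<Prod>q\<in>T. g p q) *
                   ((\<Prod>p\<in>T. \<Prod>q\<in>S. g p q) * (\<Prod>p\<in>T. \<Prod>q\<in>T - {p}. g p q))"
    by (simp add: S T prod.distrib)
  also have "(\<Prod>p\<in>T. \<Prod>q\<in>S. g p q) = (\<Prod>p\<in>S. \<Prod>q\<in>T. g p q)"
    by (subst prod.swap) (simp add: sym)
  finally show ?thesis
    by (simp only: power2_eq_square mult_ac)
qed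

lemma prod_ordered_pairs_square:
  fixes g :: "'a::linorder \<Rightarrow> 'a \<Rightarrow> 'b::comm_monoid_mult"
  assumes sym: "\<And>p q. g p q = g q p" and "finite S"
  shows "(\<Prod>(p, q)\<in>{(p, q). p \<in> S \<and> q \<in> S \<and> p < q}. g p q)^2 = (\<Prod>p\<in>S. \<Prod>q\<in>S - {p}. g p q)"
proof -
  let ?L = "{(p, q). p \<in> S \<and> q \<in> S \<and> p < q}"
  have fin: "finite ?L" by (rule finite_subset[of _ "S \<times> S"]) (use assms in auto)
  have "(\<Prod>p\<in>S. \<Prod>q\<in>S - {p}. g p q) = (\<Prod>(p, q)\<in>(SIGMA p:S. S - {p}). g p q)"
    using assms by (simp add: prod.Sigma)
  also have "(SIGMA p:S. S - {p}) = ?L \<union> (\<lambda>(p, q). (q, p)) ` ?L" by auto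
  also have "(\<Prod>(p, q)\<in>?L \<union> (\<lambda>(p, q). (q, p)) ` ?L. g p q) =
             (\<Prod>(p, q)\<in>?L. g p q) * (\<Prod>(p, q)\<in>(\<lambda>(p, q). (q, p)) ` ?L. g p q)"
    by (rule prod.union_disjoint) (use fin in auto)
  also have "(\<Prod>(p, q)\<in>(\<lambda>(p, q). (q, p)) ` ?L. g p q) = (\<Prod>(p, q)\<in>?L. g p q)"
    by (subst prod.reindex) (auto simp: inj_on_def case_prod_beta sym)
  finally show ?thesis by (simp add: power2_eq_square)
qed

lemma discr_pos:
  assumes "finite S" "inj_on \<kappa> S"
  shows "0 < discr \<kappa> S"
  unfolding discr_def using assms by (intro prod_pos) (auto simp: inj_on_def)

lemma dist_prod_pos:
  assumes "finite S" "finite T" "S \<inter> T = {}" "inj_on \<kappa> (S \<union> T)"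
  shows "0 < dist_prod \<kappa> S T"
  unfolding dist_prod_def using assms by (intro prod_pos) (auto simp: inj_on_def)

lemma discr_Un:
  assumes "finite S" "finite T" "S \<inter> T = {}"
  shows "discr \<kappa> (S \<union> T) = discr \<kappa> S * discr \<kappa> T * (dist_prod \<kappa> S T)^2"
  unfolding discr_def dist_prod_def using assms by (intro prod_offdiag_Un) (auto simp: abs_minus_commute)

lemma discr_image:
  assumes "inj_on u I"
  shows "discr \<kappa> (u ` I) = (\<Prod>r\<in>I. \<Prod>r'\<in>I - {r}. \<bar>\<kappa> (u r) - \<kappa> (u r')\<bar>)"
  unfolding discr_def using assms by (rule prod_offdiag_reindex)

lemma sqrt_discr_eq_Vandermonde:
  fixes \<kappa> :: "'a::linorder \<Rightarrow> real"
  assumes "finite S" "strict_mono_on S \<kappa>"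
  shows "sqrt (discr \<kappa> S) = (\<Prod>(p, q)\<in>{(p, q). p \<in> S \<and> q \<in> S \<and> p < q}. \<kappa> q - \<kappa> p)"
proof -
  have "(\<Prod>(p, q)\<in>{(p, q). p \<in> S \<and> q \<in> S \<and> p < q}. \<kappa> q - \<kappa> p) =
        (\<Prod>(p, q)\<in>{(p, q). p \<in> S \<and> q \<in> S \<and> p < q}. \<bar>\<kappa> p - \<kappa> q\<bar>)"
    using assms(2) by (intro prod.cong) (auto dest: strict_mono_onD)
  moreover have "(\<Prod>(p, q)\<in>{(p, q). p \<in> S \<and> q \<in> S \<and> p < q}. \<bar>\<kappa> p - \<kappa> q\<bar>)^2 = discr \<kappa> S"
    unfolding discr_def
    using prod_ordered_pairs_square[of "\<lambda>p q. \<bar>\<kappa> p - \<kappa> q\<bar>", OF abs_minus_commute assms(1)] .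
  ultimately show ?thesis
    by (metis (no_types, lifting) abs_of_nonneg prod_nonneg abs_ge_zero case_prod_beta real_sqrt_abs)
qed

lemma E_eq_sqrt_discr:
  fixes \<kappa> :: "nat \<Rightarrow> real"
  assumes "finite S" "strict_mono_on S \<kappa>"
  shows "E \<kappa> x y t S = sqrt (discr \<kappa> S) * exp (\<Sum>i\<in>S. xi \<kappa> x y t i)"
  unfolding E_def sqrt_discr_eq_Vandermonde[OF assms] ..

lemma prod_remove_image:
  fixes h :: "'a \<Rightarrow> 'b::comm_monoid_mult"
  assumes "finite P" "inj_on u I" "u ` I \<subseteq> P" "r \<in> I"
  shows "(\<Prod>q\<in>P - {u r}. h q) = (\<Prod>q\<in>P - u ` I. h q) * (\<Prod>r'\<in>I - {r}. h (u r'))"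
proof -
  have "P - {u r} = (P - u ` I) \<union> u ` (I - {r})" "(P - u ` I) \<inter> u ` (I - {r}) = {}"
    using assms(2-4) by (auto simp: inj_on_def)
  moreover have "finite (u ` (I - {r}))" using assms(1,3) by (auto intro: finite_subset)
  moreover have "inj_on u (I - {r})" using assms(2) by (rule inj_on_subset) auto
  ultimately show ?thesis using assms(1) by (simp add: prod.union_disjoint prod.reindex)
qed

lemma prod_dists_remove_image:
  fixes \<kappa> :: "'a \<Rightarrow> real"
  assumes "finite P" "finite I" "inj_on u I" "inj_on w I" "u ` I \<subseteq> P"
  shows "(\<Prod>r\<in>I. \<Prod>q\<in>P - {u r}. \<bar>\<kappa> q - \<kappa> (w r)\<bar>) =
         dist_prod \<kappa> (P - u ` I) (w ` I) * (\<Prod>r\<in>I. \<Prod>r'\<in>I - {r}. \<bar>\<kappa> (u r') - \<kappa> (w r)\<bar>)"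
proof -
  have "(\<Prod>r\<in>I. \<Prod>q\<in>P - {u r}. \<bar>\<kappa> q - \<kappa> (w r)\<bar>) =
        (\<Prod>r\<in>I. (\<Prod>q\<in>P - u ` I. \<bar>\<kappa> q - \<kappa> (w r)\<bar>) * (\<Prod>r'\<in>I - {r}. \<bar>\<kappa> (u r') - \<kappa> (w r)\<bar>))"
    using assms(1,3,5) by (intro prod.cong refl prod_remove_image)
  also have "\<dots> = (\<Prod>r\<in>I. \<Prod>q\<in>P - u ` I. \<bar>\<kappa> q - \<kappa> (w r)\<bar>) *
                   (\<Prod>r\<in>I. \<Prod>r'\<in>I - {r}. \<bar>\<kappa> (u r') - \<kappa> (w r)\<bar>)"
    by (rule prod.distrib)
  also have "(\<Prod>r\<in>I. \<Prod>q\<in>P - u ` I. \<bar>\<kappa> q - \<kappa> (w r)\<bar>) = dist_prod \<kappa> (P - u ` I) (w ` I)"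
    unfolding dist_prod_def using assms(4) by (subst prod.swap) (simp add: prod.reindex)
  finally show ?thesis .
qed

lemma cross_ratio_product_square:
  fixes \<kappa> :: "'a \<Rightarrow> real" and u j :: "'i::linorder \<Rightarrow> 'a"
  assumes "finite I" "inj_on u I" "inj_on j I"
  shows "(\<Prod>(r, r')\<in>{(r, r'). r \<in> I \<and> r' \<in> I \<and> r < r'}.
            cross_ratio (\<kappa> (u r)) (\<kappa> (j r)) (\<kappa> (u r')) (\<kappa> (j r')))^2 =
         discr \<kappa> (u ` I) * discr \<kappa> (j ` I) / (\<Prod>r\<in>I. \<Prod>r'\<in>I - {r}. \<bar>\<kappa> (u r') - \<kappa> (j r)\<bar>)^2"
proof -
  let ?c = "\<lambda>r r'. \<bar>cross_ratio (\<kappa> (u r)) (\<kappa> (j r)) (\<kappa> (u r')) (\<kappa> (j r'))\<bar>"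
  let ?Y = "\<Prod>r\<in>I. \<Prod>r'\<in>I - {r}. \<bar>\<kappa> (u r') - \<kappa> (j r)\<bar>"
  have "(\<Prod>(r, r')\<in>{(r, r'). r \<in> I \<and> r' \<in> I \<and> r < r'}.
            cross_ratio (\<kappa> (u r)) (\<kappa> (j r)) (\<kappa> (u r')) (\<kappa> (j r')))^2 =
        (\<Prod>(r, r')\<in>{(r, r'). r \<in> I \<and> r' \<in> I \<and> r < r'}. ?c r r')^2"
    by (simp add: abs_prod[symmetric] case_prod_beta)
  also have "\<dots> = (\<Prod>r\<in>I. \<Prod>r'\<in>I - {r}. ?c r r')"
    using prod_ordered_pairs_square[of ?c, OF _ assms(1)] by (simp add: cross_ratio_swap_pairs)
  also have "\<dots> = (\<Prod>r\<in>I. \<Prod>r'\<in>I - {r}. \<bar>\<kappa> (u r) - \<kappa> (u r')\<bar> * \<bar>\<kappa> (j r) - \<kappa> (j r')\<bar> /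
                      (\<bar>\<kappa> (u r) - \<kappa> (j r')\<bar> * \<bar>\<kappa> (j r) - \<kappa> (u r')\<bar>))"
    by (simp only: abs_cross_ratio)
  also have "\<dots> = discr \<kappa> (u ` I) * discr \<kappa> (j ` I) /
                  ((\<Prod>r\<in>I. \<Prod>r'\<in>I - {r}. \<bar>\<kappa> (u r) - \<kappa> (j r')\<bar>) *
                   (\<Prod>r\<in>I. \<Prod>r'\<in>I - {r}. \<bar>\<kappa> (j r) - \<kappa> (u r')\<bar>))"
    by (simp only: discr_image[OF assms(2)] discr_image[OF assms(3)] prod_dividef prod.distrib)
  also have "(\<Prod>r\<in>I. \<Prod>r'\<in>I - {r}. \<bar>\<kappa> (u r) - \<kappa> (j r')\<bar>) = ?Y"
    by (rule prod_offdiag_swap[OF assms(1)])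
  also have "(\<Prod>r\<in>I. \<Prod>r'\<in>I - {r}. \<bar>\<kappa> (j r) - \<kappa> (u r')\<bar>) = ?Y"
    by (simp add: abs_minus_commute)
  finally show ?thesis by (simp add: power2_eq_square)
qed

lemma discr_exchange:
  fixes \<kappa> :: "'a \<Rightarrow> real" and u j :: "'i::linorder \<Rightarrow> 'a"
  assumes "finite P" "finite I" "inj_on u I" "inj_on j I" "u ` I \<subseteq> P" "j ` I \<inter> P = {}"
    and "inj_on \<kappa> (P \<union> j ` I)"
  shows "discr \<kappa> (P - u ` I \<union> j ` I) / discr \<kappa> P =
    (\<bar>\<Prod>(r, r')\<in>{(r, r'). r \<in> I \<and> r' \<in> I \<and> r < r'}.
        cross_ratio (\<kappa> (u r)) (\<kappa> (j r)) (\<kappa> (u r')) (\<kappa> (j r'))\<bar> *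
     (\<Prod>r\<in>I. \<Prod>q\<in>P - {u r}. \<bar>\<kappa> q - \<kappa> (j r)\<bar>) / (\<Prod>r\<in>I. \<Prod>q\<in>P - {u r}. \<bar>\<kappa> q - \<kappa> (u r)\<bar>))^2"
    (is "_ = (?C * ?B / ?D)^2")
proof -
  define R where "R = P - u ` I"
  define Y where "Y = (\<Prod>r\<in>I. \<Prod>r'\<in>I - {r}. \<bar>\<kappa> (u r') - \<kappa> (j r)\<bar>)"
  have fin: "finite R" "finite (u ` I)" "finite (j ` I)" using assms(1,2) by (simp_all add: R_def)
  have P: "P = R \<union> u ` I" "R \<inter> u ` I = {}" "R \<inter> j ` I = {}" using assms(5,6) by (auto simp: R_def)
  have inj: "inj_on \<kappa> (R \<union> u ` I)" using assms(7) P(1) by (simp add: inj_on_Un)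
  have B: "?B = dist_prod \<kappa> R (j ` I) * Y"
    unfolding R_def Y_def using assms by (intro prod_dists_remove_image)
  have D: "?D = dist_prod \<kappa> R (u ` I) * discr \<kappa> (u ` I)"
    unfolding R_def discr_image[OF assms(3)] prod_dists_remove_image[OF assms(1-3,3,5)]
    by (simp add: abs_minus_commute)
  have C: "?C^2 = discr \<kappa> (u ` I) * discr \<kappa> (j ` I) / Y^2"
    unfolding power2_abs Y_def using assms(2-4) by (rule cross_ratio_product_square)
  have discr_J: "discr \<kappa> (P - u ` I \<union> j ` I) = discr \<kappa> R * discr \<kappa> (j ` I) * (dist_prod \<kappa> R (j ` I))^2"
    unfolding R_def[symmetric] using fin(1,3) P(3) by (rule discr_Un)
  have discr_P: "discr \<kappa> P = discr \<kappa> R * discr \<kappa> (u ` I) * (dist_prod \<kappa> R (u ` I))^2"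
    using discr_Un[OF fin(1,2) P(2)] P(1) by simp
  have "0 < discr \<kappa> R" "0 < discr \<kappa> (u ` I)"
    using discr_pos[OF fin(1) inj_on_subset[OF inj]] discr_pos[OF fin(2) inj_on_subset[OF inj]] by simp_all
  moreover have "0 < dist_prod \<kappa> R (u ` I)" using fin(1,2) P(2) inj by (rule dist_prod_pos)
  moreover have "0 < Y"
    unfolding Y_def
  proof (intro prod_pos)
    fix r r' assume "r \<in> I" "r' \<in> I - {r}"
    then have "u r' \<in> P" "j r \<in> j ` I" "u r' \<noteq> j r" using assms(5,6) by auto
    then have "\<kappa> (u r') \<noteq> \<kappa> (j r)" by (simp add: inj_on_eq_iff[OF assms(7)])
    then show "0 < \<bar>\<kappa> (u r') - \<kappa> (j r)\<bar>" by simp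
  qed
  ultimately show ?thesis unfolding discr_J discr_P B D using C
    by (simp add: power_mult_distrib power_divide) (simp add: field_simps power2_eq_square)
qed

lemma sum_exchange:
  fixes f :: "'a \<Rightarrow> 'b::ab_group_add"
  assumes "finite P" "finite I" "inj_on u I" "inj_on j I" "u ` I \<subseteq> P" "j ` I \<inter> P = {}"
  shows "(\<Sum>q\<in>P - u ` I \<union> j ` I. f q) = (\<Sum>q\<in>P. f q) + (\<Sum>r\<in>I. f (j r) - f (u r))"
proof -
  have "(\<Sum>q\<in>P. f q) = (\<Sum>q\<in>P - u ` I. f q) + (\<Sum>r\<in>I. f (u r))"
    using assms(1,3,5) by (simp add: sum.subset_diff[of "u ` I" P] sum.reindex)
  moreover have "(\<Sum>q\<in>P - u ` I \<union> j ` I. f q) = (\<Sum>q\<in>P - u ` I. f q) + (\<Sum>r\<in>I. f (j r))"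
    using assms by (subst sum.union_disjoint) (auto simp: sum.reindex)
  ultimately show ?thesis by (simp add: sum_subtractf)
qed

lemma exp_phi0:
  assumes "inj_on piv {1..N}" "k \<in> {1..N}" "A k j \<noteq> 0" "j \<notin> piv ` {1..N}"
    and "inj_on \<kappa> (insert j (piv ` {1..N}))"
  shows "exp (phi0 N A \<kappa> piv k j) = \<bar>A k j\<bar> *
    (\<Prod>q\<in>piv ` {1..N} - {piv k}. \<bar>\<kappa> q - \<kappa> j\<bar>) / (\<Prod>q\<in>piv ` {1..N} - {piv k}. \<bar>\<kappa> q - \<kappa> (piv k)\<bar>)"
proof -
  have reindex: "(\<Prod>m\<in>{1..N} - {k}. h (piv m)) = (\<Prod>q\<in>piv ` {1..N} - {piv k}. h q)" for h :: "nat \<Rightarrow> real"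
  proof -
    have "piv ` {1..N} - {piv k} = piv ` ({1..N} - {k})"
      using assms(1,2) by (simp add: inj_on_image_set_diff)
    moreover have "inj_on piv ({1..N} - {k})" using assms(1) by (rule inj_on_subset) auto
    ultimately show ?thesis by (simp add: prod.reindex)
  qed
  have "0 < \<bar>A k j\<bar> * (\<Prod>q\<in>piv ` {1..N} - {piv k}. \<bar>\<kappa> q - \<kappa> j\<bar>) /
            (\<Prod>q\<in>piv ` {1..N} - {piv k}. \<bar>\<kappa> q - \<kappa> (piv k)\<bar>)"
    using assms(2-5) by (intro divide_pos_pos mult_pos_pos prod_pos) (auto simp: inj_on_def)
  then show ?thesis
    unfolding phi0_def reindex[of "\<lambda>q. \<bar>\<kappa> q - \<kappa> j\<bar>"] reindex[of "\<lambda>q. \<bar>\<kappa> q - \<kappa> (piv k)\<bar>"]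
    by simp
qed

lemma E_exchange:
  fixes \<kappa> :: "nat \<Rightarrow> real" and u j :: "'i::linorder \<Rightarrow> nat"
  assumes "finite P" "finite I" "inj_on u I" "inj_on j I" "u ` I \<subseteq> P" "j ` I \<inter> P = {}"
    and "strict_mono_on (P \<union> j ` I) \<kappa>"
  shows "E \<kappa> x y t (P - u ` I \<union> j ` I) / E \<kappa> x y t P =
    \<bar>\<Prod>(r, r')\<in>{(r, r'). r \<in> I \<and> r' \<in> I \<and> r < r'}.
        cross_ratio (\<kappa> (u r)) (\<kappa> (j r)) (\<kappa> (u r')) (\<kappa> (j r'))\<bar> *
     (\<Prod>r\<in>I. \<Prod>q\<in>P - {u r}. \<bar>\<kappa> q - \<kappa> (j r)\<bar>) / (\<Prod>r\<in>I. \<Prod>q\<in>P - {u r}. \<bar>\<kappa> q - \<kappa> (u r)\<bar>) *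
     exp (\<Sum>r\<in>I. xi \<kappa> x y t (j r) - xi \<kappa> x y t (u r))"
    (is "_ = ?Q * exp ?\<Delta>")
proof -
  let ?J = "P - u ` I \<union> j ` I"
  have inj: "inj_on \<kappa> (P \<union> j ` I)" using assms(7) by (rule strict_mono_on_imp_inj_on)
  have "strict_mono_on ?J \<kappa>" "strict_mono_on P \<kappa>"
    by (rule monotone_on_subset[OF assms(7)], blast)+
  moreover have "finite ?J" using assms(1,2) by simp
  ultimately have "E \<kappa> x y t ?J / E \<kappa> x y t P =
      sqrt (discr \<kappa> ?J) / sqrt (discr \<kappa> P) * (exp (\<Sum>i\<in>?J. xi \<kappa> x y t i) / exp (\<Sum>i\<in>P. xi \<kappa> x y t i))"
    using assms(1) by (simp add: E_eq_sqrt_discr)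
  also have "sqrt (discr \<kappa> ?J) / sqrt (discr \<kappa> P) = ?Q"
    using discr_exchange[OF assms(1-6) inj] by (simp add: real_sqrt_divide[symmetric] prod_nonneg)
  also have "exp (\<Sum>i\<in>?J. xi \<kappa> x y t i) / exp (\<Sum>i\<in>P. xi \<kappa> x y t i) = exp ?\<Delta>"
    by (simp add: sum_exchange[OF assms(1-6)] exp_add)
  finally show ?thesis .
qed

lemma exp_sum_phit:
  assumes "finite I" "inj_on piv {1..N}" "\<And>r. r \<in> I \<Longrightarrow> kr r \<in> {1..N}"
    and "\<And>r. r \<in> I \<Longrightarrow> A (kr r) (jr r) \<noteq> 0" "jr ` I \<inter> piv ` {1..N} = {}"
    and "inj_on \<kappa> (piv ` {1..N} \<union> jr ` I)"
  shows "exp (\<Sum>r\<in>I. phit N A \<kappa> x y t piv (kr r) (jr r)) =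
    exp (\<Sum>r\<in>I. xi \<kappa> x y t (jr r) - xi \<kappa> x y t (piv (kr r))) *
    (\<Prod>r\<in>I. \<bar>A (kr r) (jr r)\<bar> * (\<Prod>q\<in>piv ` {1..N} - {piv (kr r)}. \<bar>\<kappa> q - \<kappa> (jr r)\<bar>) /
                (\<Prod>q\<in>piv ` {1..N} - {piv (kr r)}. \<bar>\<kappa> q - \<kappa> (piv (kr r))\<bar>))"
proof -
  have "exp (\<Sum>r\<in>I. phit N A \<kappa> x y t piv (kr r) (jr r)) =
        exp (\<Sum>r\<in>I. xi \<kappa> x y t (jr r) - xi \<kappa> x y t (piv (kr r))) *
        (\<Prod>r\<in>I. exp (phi0 N A \<kappa> piv (kr r) (jr r)))"
    unfolding phit_def phi_def sum.distrib exp_add exp_sum[OF assms(1)] ..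
  also have "(\<Prod>r\<in>I. exp (phi0 N A \<kappa> piv (kr r) (jr r))) =
    (\<Prod>r\<in>I. \<bar>A (kr r) (jr r)\<bar> * (\<Prod>q\<in>piv ` {1..N} - {piv (kr r)}. \<bar>\<kappa> q - \<kappa> (jr r)\<bar>) /
                (\<Prod>q\<in>piv ` {1..N} - {piv (kr r)}. \<bar>\<kappa> q - \<kappa> (piv (kr r))\<bar>))"
  proof (rule prod.cong[OF refl])
    fix r assume r: "r \<in> I"
    then have "jr r \<notin> piv ` {1..N}" "jr r \<in> jr ` I" using assms(5) by auto
    with r show "exp (phi0 N A \<kappa> piv (kr r) (jr r)) = \<bar>A (kr r) (jr r)\<bar> *
        (\<Prod>q\<in>piv ` {1..N} - {piv (kr r)}. \<bar>\<kappa> q - \<kappa> (jr r)\<bar>) /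
        (\<Prod>q\<in>piv ` {1..N} - {piv (kr r)}. \<bar>\<kappa> q - \<kappa> (piv (kr r))\<bar>)"
      by (intro exp_phi0 assms(2-4) inj_on_subset[OF assms(6)]) auto
  qed
  finally show ?thesis .
qed

theorem mainTheorem6:
  fixes N M n :: nat and \<kappa> :: "nat \<Rightarrow> real" and A :: "nat \<Rightarrow> nat \<Rightarrow> real"
    and piv :: "nat \<Rightarrow> nat" and kr jr :: "nat \<Rightarrow> nat" and x y t :: real
  assumes kappa_mono: "\<And>p q. p \<in> {1..M} \<Longrightarrow> q \<in> {1..M} \<Longrightarrow> p < q \<Longrightarrow> \<kappa> p < \<kappa> q"
    and A_rref: "rref N M A piv"
    and n_range: "1 \<le> n" "n \<le> N"
    and kr_range: "\<And>r. r \<in> {1..n} \<Longrightarrow> kr r \<in> {1..N}"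
    and kr_inj: "inj_on kr {1..n}"
    and jr_range: "\<And>r. r \<in> {1..n} \<Longrightarrow> jr r \<in> {1..M} - piv ` {1..N}"
    and jr_inj: "inj_on jr {1..n}"
    and nonzero: "\<And>r. r \<in> {1..n} \<Longrightarrow> A (kr r) (jr r) \<noteq> 0"
  shows "\<bar>\<Prod>r\<in>{1..n}. A (kr r) (jr r)\<bar> *
           E \<kappa> x y t ((piv ` {1..N} - piv ` kr ` {1..n}) \<union> jr ` {1..n}) / E \<kappa> x y t (piv ` {1..N})
         = \<bar>\<Prod>(r,r')\<in>{(r,r'). r \<in> {1..n} \<and> r' \<in> {1..n} \<and> r < r'}.
              ((\<kappa> (piv (kr r)) - \<kappa> (piv (kr r'))) * (\<kappa> (jr r) - \<kappa> (jr r')))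
              / ((\<kappa> (piv (kr r)) - \<kappa> (jr r')) * (\<kappa> (jr r) - \<kappa> (piv (kr r'))))\<bar>
           * exp (\<Sum>r\<in>{1..n}. phit N A \<kappa> x y t piv (kr r) (jr r))"
proof -
  let ?I = "{1..n}" and ?P = "piv ` {1..N}" and ?u = "\<lambda>r. piv (kr r)"
  have piv_inj: "inj_on piv {1..N}" and P_M: "?P \<subseteq> {1..M}"
    using A_rref unfolding rref_def by (auto intro!: strict_mono_on_imp_inj_on strict_mono_onI)
  have "inj_on (piv \<circ> kr) ?I"
    using kr_inj by (rule comp_inj_on) (use kr_range in \<open>auto intro: inj_on_subset[OF piv_inj]\<close>)
  then have u_inj: "inj_on ?u ?I" by (simp add: comp_def)
  have u_P: "?u ` ?I \<subseteq> ?P" using kr_range by auto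
  have j: "jr ` ?I \<inter> ?P = {}" "jr ` ?I \<subseteq> {1..M}" using jr_range by blast+
  have \<kappa>_mono: "strict_mono_on (?P \<union> jr ` ?I) \<kappa>"
    using P_M j(2) by (intro strict_mono_onI kappa_mono) auto
  have ratio: "E \<kappa> x y t ((?P - piv ` kr ` ?I) \<union> jr ` ?I) / E \<kappa> x y t ?P =
      \<bar>\<Prod>(r, r')\<in>{(r, r'). r \<in> ?I \<and> r' \<in> ?I \<and> r < r'}.
         cross_ratio (\<kappa> (?u r)) (\<kappa> (jr r)) (\<kappa> (?u r')) (\<kappa> (jr r'))\<bar> *
      (\<Prod>r\<in>?I. \<Prod>q\<in>?P - {?u r}. \<bar>\<kappa> q - \<kappa> (jr r)\<bar>) / (\<Prod>r\<in>?I. \<Prod>q\<in>?P - {?u r}. \<bar>\<kappa> q - \<kappa> (?u r)\<bar>) *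
      exp (\<Sum>r\<in>?I. xi \<kappa> x y t (jr r) - xi \<kappa> x y t (?u r))"
    unfolding image_image by (rule E_exchange[OF _ _ u_inj jr_inj u_P j(1) \<kappa>_mono]) simp_all
  have phit: "exp (\<Sum>r\<in>?I. phit N A \<kappa> x y t piv (kr r) (jr r)) =
      exp (\<Sum>r\<in>?I. xi \<kappa> x y t (jr r) - xi \<kappa> x y t (?u r)) *
      (\<Prod>r\<in>?I. \<bar>A (kr r) (jr r)\<bar> * (\<Prod>q\<in>?P - {?u r}. \<bar>\<kappa> q - \<kappa> (jr r)\<bar>) / (\<Prod>q\<in>?P - {?u r}. \<bar>\<kappa> q - \<kappa> (?u r)\<bar>))"
    using kr_range nonzero j(1) strict_mono_on_imp_inj_on[OF \<kappa>_mono]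
    by (intro exp_sum_phit piv_inj) auto
  show ?thesis
    unfolding times_divide_eq_right[symmetric] ratio phit
    by (simp add: cross_ratio_def abs_prod prod_dividef prod.distrib)
qed

end
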